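(* For $n\in\mathbb{N}$ let $(U_k^{(n)})_{k\in\mathbb{N}}$ be independent random variables uniformly distributed on $\{1,\dots,n\}$. Assume $m_n\to\infty$ and $m_n=o(n)$ as $n\to\infty$. Then $${\rm Var}\Bigl(\sum_{m_n<p\le n,\ p\ \text{prime}}\log p\Bigl(\sum_{k=1}^{m_n}\mathbbm{1}_{\{\lambda_p(U_k^{(n)})\ge1\}}-\mathbbm{1}_{\{\max_{1\le k\le m_n}\lambda_p(U_k^{(n)})\ge1\}}\Bigr)\Bigr)=O(m_n\log m_n),\qquad n\to\infty.$$
   Context: For a prime $p$ and $k\in\mathbb{N}$, $\lambda_p(k)$ is the exponent of $p$ in the prime factorization of $k$. *)

theory Defs
  imports "HOL-Probability.Probability" "HOL-Library.Landau_Symbols"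
    "HOL-Computational_Algebra.Primes"
begin

definition lam :: "nat \<Rightarrow> nat \<Rightarrow> nat" where
  "lam p k = multiplicity p k"

text \<open>Joint law of m independent random variables U_1,...,U_m, each uniform on
  {1..n}: the uniform distribution on the functions {1..m} \<rightarrow> {1..n}.\<close>
definition unif_tuples :: "nat \<Rightarrow> nat \<Rightarrow> (nat \<Rightarrow> nat) pmf" where
  "unif_tuples n m = pmf_of_set (PiE {1..m} (\<lambda>_. {1..n}))"

definition S :: "nat \<Rightarrow> nat \<Rightarrow> (nat \<Rightarrow> nat) \<Rightarrow> real" where
  "S n m U = (\<Sum>p\<in>{p. prime p \<and> m < p \<and> p \<le> n}.
      ln (real p) * ((\<Sum>k=1..m. if lam p (U k) \<ge> 1 then 1 else 0)
        - (if Max ((\<lambda>k. lam p (U k)) ` {1..m}) \<ge> 1 then 1 else 0)))"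

end

theory Submission
  imports Defs
begin

text \<open>
  For a prime p > m the summand of S counts the coordinates divisible by p beyond the first.
  Hence replacing U_k by y changes S by at most D_k(U) + D_k(U[k := y]), where the collision
  weight D_k(U) is the sum over j \<noteq> k of the total weight ln p of the primes p > m dividing
  both U_k and U_j. The Efron--Stein inequality then bounds the variance by
  4m E[D_k^2] \<le> 4m (m E[e(U_1,U_2)^2] + m^2 E[e(U_1,U_2) e(U_1,U_3)]), e the pairwise weight.
  Since p divides U with probability at most 1/p and pq divides U with probability at most
  1/(pq), both moments are controlled by the tails of the sums of (ln p)^2/p^2 and ln p/p^2 over
  primes p > m, which are O(ln m / m) and O(1/m) by a dyadic decomposition and Chebyshev's bound
  on the sum of ln p over k < p \<le> 2k (these primes divide the central binomial coefficient).
\<close>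

section \<open>Averages over finite sets\<close>

definition avg :: "'a set \<Rightarrow> ('a \<Rightarrow> real) \<Rightarrow> real" where
  "avg A f = sum f A / real (card A)"

definition avg_var :: "'a set \<Rightarrow> ('a \<Rightarrow> real) \<Rightarrow> real" where
  "avg_var A f = avg A (\<lambda>x. (f x - avg A f)\<^sup>2)"

lemma avg_add: "avg A (\<lambda>x. f x + g x) = avg A f + avg A g"
  unfolding avg_def by (simp add: sum.distrib add_divide_distrib)

lemma avg_diff: "avg A (\<lambda>x. f x - g x) = avg A f - avg A g"
  unfolding avg_def by (simp add: sum_subtractf diff_divide_distrib)

lemma avg_cmult: "avg A (\<lambda>x. c * f x) = c * avg A f"
  unfolding avg_def by (simp add: sum_distrib_left)

lemma avg_multc: "avg A (\<lambda>x. f x * c) = avg A f * c"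
  unfolding avg_def by (simp add: sum_distrib_right)

lemma avg_const: "finite A \<Longrightarrow> A \<noteq> {} \<Longrightarrow> avg A (\<lambda>_. c) = c"
  unfolding avg_def by simp

lemma avg_cong: "(\<And>x. x \<in> A \<Longrightarrow> f x = g x) \<Longrightarrow> avg A f = avg A g"
  unfolding avg_def by (metis sum.cong)

lemma avg_mono: "(\<And>x. x \<in> A \<Longrightarrow> f x \<le> g x) \<Longrightarrow> avg A f \<le> avg A g"
  unfolding avg_def by (intro divide_right_mono sum_mono) auto

lemma avg_nonneg: "(\<And>x. x \<in> A \<Longrightarrow> 0 \<le> f x) \<Longrightarrow> 0 \<le> avg A f"
  unfolding avg_def by (intro divide_nonneg_nonneg sum_nonneg) auto

lemma avg_sum: "avg A (\<lambda>x. \<Sum>i\<in>I. f i x) = (\<Sum>i\<in>I. avg A (f i))"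
  unfolding avg_def by (simp add: sum.swap[of _ I A] sum_divide_distrib)

lemma avg_swap: "avg A (\<lambda>x. avg B (\<lambda>y. f x y)) = avg B (\<lambda>y. avg A (\<lambda>x. f x y))"
  unfolding avg_def by (simp add: sum.swap[of _ A B] sum_divide_distrib[symmetric])

lemma avg_var_nonneg: "0 \<le> avg_var A f"
  unfolding avg_var_def by (rule avg_nonneg) simp

lemma avg_var_eq:
  assumes "finite A" "A \<noteq> {}"
  shows "avg_var A f = avg A (\<lambda>x. (f x)\<^sup>2) - (avg A f)\<^sup>2"
proof -
  have "avg_var A f = avg A (\<lambda>x. (f x)\<^sup>2 - (2 * avg A f) * f x + (avg A f)\<^sup>2)"
    unfolding avg_var_def by (rule avg_cong) (simp add: power2_eq_square algebra_simps)
  also have "\<dots> = avg A (\<lambda>x. (f x)\<^sup>2) - (avg A f)\<^sup>2"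
    using assms by (simp add: avg_add avg_diff avg_cmult avg_const power2_eq_square)
  finally show ?thesis .
qed

lemma sq_avg_le_avg_sq:
  assumes "finite A" "A \<noteq> {}"
  shows "(avg A f)\<^sup>2 \<le> avg A (\<lambda>x. (f x)\<^sup>2)"
  using avg_var_nonneg[of A f] avg_var_eq[OF assms, of f] by simp

lemma avg_var_le_avg_sq_diff:
  assumes "finite A" "A \<noteq> {}"
  shows "avg_var A f \<le> avg A (\<lambda>y. avg A (\<lambda>z. (f y - f z)\<^sup>2))"
proof -
  have inner: "avg A (\<lambda>z. (f y - f z)\<^sup>2) = (f y)\<^sup>2 - 2 * f y * avg A f + avg A (\<lambda>z. (f z)\<^sup>2)"
    for y
  proof -
    have "avg A (\<lambda>z. (f y - f z)\<^sup>2) = avg A (\<lambda>z. (f y)\<^sup>2 - (2 * f y) * f z + (f z)\<^sup>2)"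
      by (rule avg_cong) (simp add: power2_eq_square algebra_simps)
    then show ?thesis using assms by (simp add: avg_add avg_diff avg_cmult avg_const)
  qed
  have "avg A (\<lambda>y. avg A (\<lambda>z. (f y - f z)\<^sup>2)) = 2 * avg_var A f"
    unfolding inner using assms
    by (simp add: avg_var_eq avg_add avg_diff avg_cmult avg_multc avg_const power2_eq_square)
  then show ?thesis using avg_var_nonneg[of A f] by simp
qed

section \<open>Averages over finite product sets\<close>

lemma sum_PiE_insert:
  assumes "i \<notin> I"
  shows "(\<Sum>x\<in>PiE (insert i I) T. f x) = (\<Sum>y\<in>T i. \<Sum>g\<in>PiE I T. f (g(i:=y)))"
  using assms
  by (simp add: PiE_insert_eq sum.reindex inj_combinator sum.cartesian_product prod.case_distrib)

lemma avg_PiE_insert: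
  assumes "i \<notin> I" "finite I"
  shows "avg (PiE (insert i I) (\<lambda>_. A)) f = avg A (\<lambda>y. avg (PiE I (\<lambda>_. A)) (\<lambda>g. f (g(i:=y))))"
  using assms
  by (simp add: avg_def sum_PiE_insert card_PiE sum_divide_distrib[symmetric])

lemma avg_PiE_resample:
  assumes "k \<in> I" "finite I" "finite A" "A \<noteq> {}"
  shows "avg (PiE I (\<lambda>_. A)) (\<lambda>x. avg A (\<lambda>y. H (x(k:=y)))) = avg (PiE I (\<lambda>_. A)) H"
proof -
  have I: "I = insert k (I - {k})" using assms by auto
  have "avg (PiE I (\<lambda>_. A)) (\<lambda>x. avg A (\<lambda>y. H (x(k:=y))))
      = avg A (\<lambda>z. avg (PiE (I-{k}) (\<lambda>_. A)) (\<lambda>g. avg A (\<lambda>y. H (g(k:=y)))))"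
    using assms by (subst I, subst avg_PiE_insert) simp_all
  also have "\<dots> = avg A (\<lambda>y. avg (PiE (I-{k}) (\<lambda>_. A)) (\<lambda>g. H (g(k:=y))))"
    using assms by (simp add: avg_const avg_swap[of "PiE (I-{k}) (\<lambda>_. A)" A])
  also have "\<dots> = avg (PiE I (\<lambda>_. A)) H"
    using assms by (subst (2) I, subst avg_PiE_insert) simp_all
  finally show ?thesis .
qed

lemma avg_PiE_coord:
  assumes "k \<in> I" "finite I" "finite A" "A \<noteq> {}"
  shows "avg (PiE I (\<lambda>_. A)) (\<lambda>x. h (x k)) = avg A h"
  using avg_PiE_resample[OF assms, of "\<lambda>x. h (x k)"] assms
  by (simp add: avg_const finite_PiE PiE_eq_empty_iff)

lemma avg_PiE_coord2:
  assumes "k \<in> I" "j \<in> I" "k \<noteq> j" "finite I" "finite A" "A \<noteq> {}"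
  shows "avg (PiE I (\<lambda>_. A)) (\<lambda>x. h (x k) (x j)) = avg A (\<lambda>a. avg A (\<lambda>b. h a b))"
  using avg_PiE_resample[OF assms(1,4-6), of "\<lambda>x. h (x k) (x j)"] assms
  by (simp add: avg_swap[of "PiE I (\<lambda>_. A)" A] avg_PiE_coord)

lemma avg_PiE_coord3:
  assumes "k \<in> I" "j \<in> I" "l \<in> I" "k \<noteq> j" "k \<noteq> l" "j \<noteq> l" "finite I" "finite A" "A \<noteq> {}"
  shows "avg (PiE I (\<lambda>_. A)) (\<lambda>x. h (x k) (x j) (x l))
       = avg A (\<lambda>a. avg A (\<lambda>b. avg A (\<lambda>c. h a b c)))"
  using avg_PiE_resample[OF assms(1,7-9), of "\<lambda>x. h (x k) (x j) (x l)"] assms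
  by (simp add: avg_swap[of "PiE I (\<lambda>_. A)" A] avg_PiE_coord2)

lemma avg_var_PiE_insert:
  assumes "i \<notin> I" "finite I" "finite A" "A \<noteq> {}"
  shows "avg_var (PiE (insert i I) (\<lambda>_. A)) F
       = avg (PiE I (\<lambda>_. A)) (\<lambda>g. avg_var A (\<lambda>y. F (g(i:=y))))
         + avg_var (PiE I (\<lambda>_. A)) (\<lambda>g. avg A (\<lambda>y. F (g(i:=y))))"
proof -
  define X where "X = PiE I (\<lambda>_. A)"
  define G where "G g = avg A (\<lambda>y. F (g(i:=y)))" for g
  have fin: "finite X" "X \<noteq> {}" "finite (PiE (insert i I) (\<lambda>_. A))" "PiE (insert i I) (\<lambda>_. A) \<noteq> {}"
    unfolding X_def using assms by (auto simp: finite_PiE PiE_eq_empty_iff)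
  have swap: "avg (PiE (insert i I) (\<lambda>_. A)) H = avg X (\<lambda>g. avg A (\<lambda>y. H (g(i:=y))))" for H
    unfolding X_def using assms by (simp add: avg_PiE_insert avg_swap[of A])
  have "avg_var (PiE (insert i I) (\<lambda>_. A)) F
      = avg X (\<lambda>g. avg A (\<lambda>y. (F (g(i:=y)))\<^sup>2)) - (avg X G)\<^sup>2"
    unfolding avg_var_eq[OF fin(3,4)] swap G_def ..
  also have "\<dots> = avg X (\<lambda>g. avg A (\<lambda>y. (F (g(i:=y)))\<^sup>2) - (G g)\<^sup>2)
                 + (avg X (\<lambda>g. (G g)\<^sup>2) - (avg X G)\<^sup>2)"
    by (simp add: avg_diff)
  also have "\<dots> = avg X (\<lambda>g. avg_var A (\<lambda>y. F (g(i:=y)))) + avg_var X G"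
    unfolding avg_var_eq[OF fin(1,2)] avg_var_eq[OF assms(3,4)] G_def ..
  finally show ?thesis unfolding X_def G_def .
qed

lemma efron_stein:
  assumes "finite I" "finite A" "A \<noteq> {}"
  shows "avg_var (PiE I (\<lambda>_. A)) F
       \<le> (\<Sum>k\<in>I. avg (PiE I (\<lambda>_. A)) (\<lambda>x. avg A (\<lambda>y. (F x - F (x(k:=y)))\<^sup>2)))"
  using assms(1)
proof (induction I arbitrary: F rule: finite_induct)
  case empty
  show ?case by (simp add: avg_var_def avg_def)
next
  case (insert i I)
  define X where "X = PiE I (\<lambda>_. A)"
  define G where "G g = avg A (\<lambda>y. F (g(i:=y)))" for g
  define T where "T k = avg (PiE (insert i I) (\<lambda>_. A)) (\<lambda>x. avg A (\<lambda>z. (F x - F (x(k:=z)))\<^sup>2))"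
    for k
  have T_eq: "T k = avg X (\<lambda>g. avg A (\<lambda>y. avg A (\<lambda>z. (F (g(i:=y)) - F (g(i:=y, k:=z)))\<^sup>2)))" for k
    unfolding T_def X_def avg_PiE_insert[OF insert(2,1)] by (rule avg_swap)
  have fiber: "avg X (\<lambda>g. avg_var A (\<lambda>y. F (g(i:=y)))) \<le> T i"
    unfolding T_eq fun_upd_upd by (intro avg_mono avg_var_le_avg_sq_diff assms)
  have "avg X (\<lambda>x. avg A (\<lambda>z. (G x - G (x(k:=z)))\<^sup>2)) \<le> T k" if "k \<in> I" for k
  proof -
    have "i \<noteq> k" using that insert(2) by auto
    then have diff: "G g - G (g(k:=z)) = avg A (\<lambda>y. F (g(i:=y)) - F (g(i:=y, k:=z)))" for g z
      by (simp add: G_def avg_diff fun_upd_twist)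
    show ?thesis unfolding T_eq
    proof (rule avg_mono)
      fix g
      have "avg A (\<lambda>z. (G g - G (g(k:=z)))\<^sup>2)
          \<le> avg A (\<lambda>z. avg A (\<lambda>y. (F (g(i:=y)) - F (g(i:=y, k:=z)))\<^sup>2))"
        unfolding diff by (intro avg_mono sq_avg_le_avg_sq assms)
      also have "\<dots> = avg A (\<lambda>y. avg A (\<lambda>z. (F (g(i:=y)) - F (g(i:=y, k:=z)))\<^sup>2))"
        by (rule avg_swap)
      finally show "avg A (\<lambda>z. (G g - G (g(k:=z)))\<^sup>2)
          \<le> avg A (\<lambda>y. avg A (\<lambda>z. (F (g(i:=y)) - F (g(i:=y, k:=z)))\<^sup>2))" .
    qed
  qed
  then have "avg_var X G \<le> (\<Sum>k\<in>I. T k)"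
    using insert.IH[of G] unfolding X_def by (meson order_trans sum_mono)
  with fiber have "avg_var (PiE (insert i I) (\<lambda>_. A)) F \<le> T i + (\<Sum>k\<in>I. T k)"
    using avg_var_PiE_insert[OF insert(2,1) assms(2,3), of F] unfolding X_def G_def by linarith
  with insert show ?case unfolding T_def by (simp add: fun_upd_def)
qed

section \<open>Tails of prime sums\<close>

definition primes_between :: "nat \<Rightarrow> nat \<Rightarrow> nat set" where
  "primes_between a b = {p. prime p \<and> a < p \<and> p \<le> b}"

lemma finite_primes_between [simp]: "finite (primes_between a b)"
  unfolding primes_between_def by (rule finite_subset[of _ "{..b}"]) auto

lemma primes_betweenD:
  assumes "p \<in> primes_between a b"
  shows "prime p" "a < p" "p \<le> b" "0 < p" "0 \<le> ln (real p)"
  using assms prime_gt_0_nat[of p] unfolding primes_between_def by auto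

lemma primes_between_split:
  assumes "a \<le> b" "b \<le> c"
  shows "primes_between a c = primes_between a b \<union> primes_between b c"
    and "primes_between a b \<inter> primes_between b c = {}"
  using assms unfolding primes_between_def by auto

lemma prod_primes_dvd:
  fixes N :: nat
  assumes "finite Q" "\<And>p. p \<in> Q \<Longrightarrow> prime p" "\<And>p. p \<in> Q \<Longrightarrow> p dvd N"
  shows "\<Prod>Q dvd N"
  using assms
proof (induction Q rule: finite_induct)
  case (insert p Q)
  then have "coprime p (\<Prod>Q)"
    by (intro prod_coprime_right primes_coprime) auto
  with insert show ?case by (simp add: divides_mult)
qed simp

lemma prime_dvd_central_binomial:
  assumes "prime p" "k < p" "p \<le> 2 * k"
  shows "p dvd (2 * k choose k)"
proof -
  have "fact k * fact k * (2 * k choose k) = (fact (2 * k) :: nat)"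
    using binomial_fact_lemma[of k "2 * k"] by (simp add: mult_2)
  moreover have "p dvd fact (2 * k)" "\<not> p dvd fact k * fact k"
    using assms by (simp_all add: prime_dvd_fact_iff prime_dvd_mult_iff)
  ultimately show ?thesis
    using assms(1) by (metis prime_dvd_mult_iff)
qed

lemma sum_ln_primes_between_double_le:
  "(\<Sum>p\<in>primes_between k (2 * k). ln (real p)) \<le> 2 * real k * ln 2"
proof -
  let ?P = "primes_between k (2 * k)"
  have "\<Prod>?P dvd (2 * k choose k)"
    by (intro prod_primes_dvd) (auto simp: primes_between_def prime_dvd_central_binomial)
  then have "\<Prod>?P \<le> 2 * k choose k"
    by (rule dvd_imp_le) simp
  also have "\<dots> \<le> 2 ^ (2 * k)"
    by (rule binomial_le_pow2)
  finally have "real (\<Prod>?P) \<le> real (2 ^ (2 * k))"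
    by (rule of_nat_mono)
  then have "(\<Prod>p\<in>?P. real p) \<le> 2 ^ (2 * k)"
    by simp
  moreover have "0 < (\<Prod>p\<in>?P. real p)"
    by (intro prod_pos) (auto dest: primes_betweenD)
  ultimately have "ln (\<Prod>p\<in>?P. real p) \<le> ln (2 ^ (2 * k))"
    by (subst ln_le_cancel_iff) auto
  also have "ln (\<Prod>p\<in>?P. real p) = (\<Sum>p\<in>?P. ln (real p))"
    by (rule ln_prod) (auto dest: primes_betweenD)
  finally show ?thesis
    by (simp add: ln_realpow)
qed

definition ln_prime_tail :: "nat \<Rightarrow> nat \<Rightarrow> real" where
  "ln_prime_tail m n = (\<Sum>p\<in>primes_between m n. ln (real p) / (real p)\<^sup>2)"

definition ln_sq_prime_tail :: "nat \<Rightarrow> nat \<Rightarrow> real" where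
  "ln_sq_prime_tail m n = (\<Sum>p\<in>primes_between m n. (ln (real p))\<^sup>2 / (real p)\<^sup>2)"

lemma ln_2_le_1: "ln (2::real) \<le> 1"
  using ln_le_minus_one[of 2] by simp

lemma sum_ln_sq_primes_between_double_le:
  assumes "k \<ge> 1"
  shows "(\<Sum>p\<in>primes_between k (2 * k). (ln (real p))\<^sup>2 / (real p)\<^sup>2) \<le> 2 * (ln (real k) + 1) / real k"
proof -
  have "(ln (real p))\<^sup>2 / (real p)\<^sup>2 \<le> (ln (real k) + 1) / (real k)\<^sup>2 * ln (real p)"
    if "p \<in> primes_between k (2 * k)" for p
  proof -
    note p = primes_betweenD[OF that]
    have "ln (real p) \<le> ln (2 * real k)"
      using p by simp
    also have "\<dots> \<le> ln (real k) + 1"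
      using assms ln_2_le_1 by (simp add: ln_mult)
    finally have "ln (real p) * ln (real p) \<le> (ln (real k) + 1) * ln (real p)"
      using p by (intro mult_right_mono) auto
    moreover have "(real k)\<^sup>2 \<le> (real p)\<^sup>2"
      using p by (intro power_mono) auto
    ultimately show ?thesis
      using assms p by (simp add: power2_eq_square frac_le divide_simps mult_mono)
  qed
  then have "(\<Sum>p\<in>primes_between k (2 * k). (ln (real p))\<^sup>2 / (real p)\<^sup>2)
      \<le> (ln (real k) + 1) / (real k)\<^sup>2 * (\<Sum>p\<in>primes_between k (2 * k). ln (real p))"
    by (simp add: sum_distrib_left sum_mono)
  also have "\<dots> \<le> (ln (real k) + 1) / (real k)\<^sup>2 * (2 * real k)"
    using assms sum_ln_primes_between_double_le[of k] ln_2_le_1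
    by (intro mult_left_mono) (auto intro: order_trans)
  also have "\<dots> = 2 * (ln (real k) + 1) / real k"
    using assms by (simp add: power2_eq_square)
  finally show ?thesis .
qed

lemma sum_ln_sq_primes_between_dyadic_le:
  assumes "k \<ge> 1"
  shows "(\<Sum>p\<in>primes_between k (2 ^ N * k). (ln (real p))\<^sup>2 / (real p)\<^sup>2) \<le> 4 * (ln (real k) + 2) / real k"
  using assms
proof (induction N arbitrary: k)
  case 0
  have "primes_between k k = {}" unfolding primes_between_def by auto
  with 0 show ?case by simp
next
  case (Suc N)
  note split = primes_between_split[of k "2 * k" "2 ^ N * (2 * k)"]
  have "(\<Sum>p\<in>primes_between k (2 ^ Suc N * k). (ln (real p))\<^sup>2 / (real p)\<^sup>2)
     = (\<Sum>p\<in>primes_between k (2 * k). (ln (real p))\<^sup>2 / (real p)\<^sup>2)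
       + (\<Sum>p\<in>primes_between (2 * k) (2 ^ N * (2 * k)). (ln (real p))\<^sup>2 / (real p)\<^sup>2)"
    using split by (simp add: mult_ac sum.union_disjoint)
  also have "\<dots> \<le> 2 * (ln (real k) + 1) / real k + 4 * (ln (real (2 * k)) + 2) / real (2 * k)"
    using Suc by (intro add_mono sum_ln_sq_primes_between_double_le Suc.IH) auto
  also have "\<dots> \<le> 4 * (ln (real k) + 2) / real k"
    using Suc.prems ln_2_le_1 by (simp add: ln_mult field_simps)
  finally show ?case .
qed

lemma ln_sq_prime_tail_le:
  assumes "m \<ge> 1"
  shows "ln_sq_prime_tail m n \<le> 4 * (ln (real m) + 2) / real m"
proof -
  have "n \<le> 2 ^ n * m"
    using assms less_exp[of n] by (metis le_trans less_imp_le_nat mult.commute mult_le_mono2 mult_1)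
  then have "primes_between m n \<subseteq> primes_between m (2 ^ n * m)"
    unfolding primes_between_def by auto
  then have "ln_sq_prime_tail m n \<le> (\<Sum>p\<in>primes_between m (2 ^ n * m). (ln (real p))\<^sup>2 / (real p)\<^sup>2)"
    unfolding ln_sq_prime_tail_def by (intro sum_mono2) auto
  also have "\<dots> \<le> 4 * (ln (real m) + 2) / real m"
    by (rule sum_ln_sq_primes_between_dyadic_le[OF assms])
  finally show ?thesis .
qed

lemma ln_prime_tail_le:
  assumes "m \<ge> 2"
  shows "ln_prime_tail m n \<le> ln_sq_prime_tail m n / ln (real m)"
  unfolding ln_prime_tail_def ln_sq_prime_tail_def sum_divide_distrib
proof (rule sum_mono)
  fix p assume "p \<in> primes_between m n"
  note p = primes_betweenD[OF this]
  have "0 < ln (real m)" "ln (real m) \<le> ln (real p)"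
    using assms p by auto
  then show "ln (real p) / (real p)\<^sup>2 \<le> (ln (real p))\<^sup>2 / (real p)\<^sup>2 / ln (real m)"
    using p by (simp add: power2_eq_square divide_simps mult_left_mono)
qed

lemma ln_prime_tail_nonneg: "0 \<le> ln_prime_tail m n"
  unfolding ln_prime_tail_def by (intro sum_nonneg divide_nonneg_nonneg) (auto dest: primes_betweenD)

lemma scaled_prime_tails_le:
  assumes "m \<ge> 3"
  shows "real m * ln_sq_prime_tail m n + (real m * ln_prime_tail m n)\<^sup>2 \<le> 156 * ln (real m)"
proof -
  let ?l = "ln (real m)"
  have m: "0 < real m" using assms by simp
  have "1 \<le> ln (3::real)"
    using exp_le by (subst ln_ge_iff) auto
  also have "\<dots> \<le> ?l"
    using assms by simp
  finally have l: "1 \<le> ?l" .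
  have L2: "real m * ln_sq_prime_tail m n \<le> 12 * ?l"
  proof -
    have "real m * ln_sq_prime_tail m n \<le> real m * (4 * (?l + 2) / real m)"
      using ln_sq_prime_tail_le[of m n] assms m by (intro mult_left_mono) auto
    also have "\<dots> \<le> 12 * ?l"
      using m l by simp
    finally show ?thesis .
  qed
  have "real m * ln_prime_tail m n \<le> real m * (ln_sq_prime_tail m n / ?l)"
    using ln_prime_tail_le[of m n] assms m by (intro mult_left_mono) auto
  also have "\<dots> \<le> 12"
    using L2 l by (simp add: pos_divide_le_eq)
  finally have "(real m * ln_prime_tail m n)\<^sup>2 \<le> 12\<^sup>2"
    using m ln_prime_tail_nonneg by (intro power_mono) auto
  also have "\<dots> \<le> 144 * ?l"
    using l by simp
  finally show ?thesis
    using L2 by simp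
qed

section \<open>Densities of common multiples\<close>

definition common_multiple_density :: "nat \<Rightarrow> nat \<Rightarrow> nat \<Rightarrow> real" where
  "common_multiple_density n p q = avg {1..n} (\<lambda>a. of_bool (p dvd a) * of_bool (q dvd a))"

lemma card_multiples_le:
  assumes "d \<ge> 1"
  shows "real (card ({1..n} \<inter> {a. d dvd a})) \<le> real n / real d"
proof -
  have "card ({1..n} \<inter> {a. d dvd a}) \<le> card {1..n div d}"
  proof (rule card_inj_on_le[where f = "\<lambda>a. a div d"])
    show "inj_on (\<lambda>a. a div d) ({1..n} \<inter> {a. d dvd a})"
      using assms by (auto simp: inj_on_def elim!: dvdE)
    show "(\<lambda>a. a div d) ` ({1..n} \<inter> {a. d dvd a}) \<subseteq> {1..n div d}"
      using assms by (auto elim!: dvdE simp: less_eq_div_iff_mult_less_eq mult.commute)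
  qed simp
  then have "real (card ({1..n} \<inter> {a. d dvd a})) \<le> real (n div d)"
    by simp
  also have "\<dots> \<le> real n / real d"
    by (rule of_nat_div_le_of_nat)
  finally show ?thesis .
qed

lemma avg_of_bool_dvd_le:
  assumes "d \<ge> 1"
  shows "avg {1..n} (\<lambda>a. of_bool (d dvd a)) \<le> 1 / real d"
proof -
  have "avg {1..n} (\<lambda>a. of_bool (d dvd a)) = real (card ({1..n} \<inter> {a. d dvd a})) / real n"
    by (simp add: avg_def)
  also have "\<dots> \<le> (real n / real d) / real n"
    using card_multiples_le[OF assms] by (rule divide_right_mono) simp
  also have "\<dots> \<le> 1 / real d"
    by (cases "n = 0") simp_all
  finally show ?thesis .
qed

lemma common_multiple_density_nonneg: "0 \<le> common_multiple_density n p q"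
  unfolding common_multiple_density_def by (intro avg_nonneg) simp

lemma common_multiple_density_diag_le:
  assumes "p \<ge> 1"
  shows "common_multiple_density n p p \<le> 1 / real p"
  unfolding common_multiple_density_def of_bool_conj[symmetric] conj_absorb
  using assms by (rule avg_of_bool_dvd_le)

lemma common_multiple_density_le:
  assumes "prime p" "prime q" "p \<noteq> q"
  shows "common_multiple_density n p q \<le> 1 / (real p * real q)"
proof -
  have "p dvd a \<and> q dvd a \<longleftrightarrow> p * q dvd a" for a
    using assms by (auto simp: primes_coprime divides_mult intro: dvd_mult_left dvd_mult_right)
  then have "common_multiple_density n p q = avg {1..n} (\<lambda>a. of_bool (p * q dvd a))"
    unfolding common_multiple_density_def of_bool_conj[symmetric] by simp
  also have "\<dots> \<le> 1 / real (p * q)"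
    using assms by (intro avg_of_bool_dvd_le) (simp add: Suc_le_eq prime_gt_0_nat)
  finally show ?thesis by simp
qed

definition common_weight :: "nat \<Rightarrow> nat \<Rightarrow> nat \<Rightarrow> nat \<Rightarrow> real" where
  "common_weight n m u v =
     (\<Sum>p\<in>primes_between m n. ln (real p) * (of_bool (p dvd u) * of_bool (p dvd v)))"

definition weight_sq_moment :: "nat \<Rightarrow> nat \<Rightarrow> real" where
  "weight_sq_moment n m = avg {1..n} (\<lambda>a. avg {1..n} (\<lambda>b. (common_weight n m a b)\<^sup>2))"

definition weight_cross_moment :: "nat \<Rightarrow> nat \<Rightarrow> real" where
  "weight_cross_moment n m =
     avg {1..n} (\<lambda>a. avg {1..n} (\<lambda>b. avg {1..n} (\<lambda>c. common_weight n m a b * common_weight n m a c)))"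

lemma common_weight_nonneg: "0 \<le> common_weight n m u v"
  unfolding common_weight_def by (intro sum_nonneg mult_nonneg_nonneg) (auto dest: primes_betweenD)

lemma weight_sq_moment_eq:
  "weight_sq_moment n m = (\<Sum>p\<in>primes_between m n. \<Sum>q\<in>primes_between m n.
     ln (real p) * ln (real q) * (common_multiple_density n p q * common_multiple_density n p q))"
proof -
  have "(common_weight n m a b)\<^sup>2 = (\<Sum>p\<in>primes_between m n. \<Sum>q\<in>primes_between m n.
      ln (real p) * ln (real q) * ((of_bool (p dvd a) * of_bool (q dvd a)) * (of_bool (p dvd b) * of_bool (q dvd b))))"
    for a b
    unfolding common_weight_def power2_eq_square sum_product by (intro sum.cong refl) (simp add: mult_ac)
  then show ?thesis
    unfolding weight_sq_moment_def common_multiple_density_def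
    by (simp only: avg_sum avg_cmult avg_multc)
qed

lemma weight_cross_moment_eq:
  "weight_cross_moment n m = (\<Sum>p\<in>primes_between m n. \<Sum>q\<in>primes_between m n.
     ln (real p) * ln (real q) *
       (common_multiple_density n p q * (common_multiple_density n p p * common_multiple_density n q q)))"
proof -
  have "common_weight n m a b * common_weight n m a c = (\<Sum>p\<in>primes_between m n. \<Sum>q\<in>primes_between m n.
      ln (real p) * ln (real q) * ((of_bool (p dvd a) * of_bool (q dvd a))
        * ((of_bool (p dvd b) * of_bool (p dvd b)) * (of_bool (q dvd c) * of_bool (q dvd c)))))"
    for a b c
    unfolding common_weight_def sum_product by (intro sum.cong refl) (simp add: mult_ac)
  then show ?thesis
    unfolding weight_cross_moment_def common_multiple_density_def
    by (simp only: avg_sum avg_cmult avg_multc)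
qed

lemma double_sum_le:
  fixes F :: "'a \<Rightarrow> 'a \<Rightarrow> real"
  assumes "finite P"
    and "\<And>p. p \<in> P \<Longrightarrow> F p p \<le> d p"
    and "\<And>p q. p \<in> P \<Longrightarrow> q \<in> P \<Longrightarrow> p \<noteq> q \<Longrightarrow> F p q \<le> g p * g q"
    and "\<And>p. p \<in> P \<Longrightarrow> 0 \<le> g p"
  shows "(\<Sum>p\<in>P. \<Sum>q\<in>P. F p q) \<le> (\<Sum>p\<in>P. d p) + (\<Sum>p\<in>P. g p)\<^sup>2"
proof -
  have "(\<Sum>p\<in>P. \<Sum>q\<in>P. F p q) = (\<Sum>p\<in>P. F p p + (\<Sum>q\<in>P - {p}. F p q))"
    using assms(1) by (intro sum.cong refl) (simp add: sum.remove)
  also have "\<dots> \<le> (\<Sum>p\<in>P. d p + (\<Sum>q\<in>P. g p * g q))"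
  proof (intro sum_mono add_mono)
    fix p assume p: "p \<in> P"
    show "F p p \<le> d p" using assms(2) p .
    have "(\<Sum>q\<in>P - {p}. F p q) \<le> (\<Sum>q\<in>P - {p}. g p * g q)"
      using assms(3) p by (intro sum_mono) auto
    also have "\<dots> \<le> (\<Sum>q\<in>P. g p * g q)"
      using assms(1,4) p by (intro sum_mono2) auto
    finally show "(\<Sum>q\<in>P - {p}. F p q) \<le> (\<Sum>q\<in>P. g p * g q)" .
  qed
  also have "\<dots> = (\<Sum>p\<in>P. d p) + (\<Sum>p\<in>P. g p)\<^sup>2"
    by (simp add: sum.distrib power2_eq_square sum_product)
  finally show ?thesis .
qed

text \<open>Both weight moments have this shape, with c the density itself (\<gamma> = 1) or the product
  of the diagonal densities (\<gamma> = 1/m, as p > m).\<close>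

lemma density_weighted_sum_le:
  assumes diag: "\<And>p. p \<in> primes_between m n \<Longrightarrow> 0 \<le> c p p \<and> c p p \<le> \<gamma> / real p"
    and off_diag: "\<And>p q. p \<in> primes_between m n \<Longrightarrow> q \<in> primes_between m n \<Longrightarrow> p \<noteq> q
                     \<Longrightarrow> 0 \<le> c p q \<and> c p q \<le> 1 / (real p * real q)"
  shows "(\<Sum>p\<in>primes_between m n. \<Sum>q\<in>primes_between m n.
           ln (real p) * ln (real q) * (common_multiple_density n p q * c p q))
         \<le> \<gamma> * ln_sq_prime_tail m n + (ln_prime_tail m n)\<^sup>2"
  unfolding ln_sq_prime_tail_def ln_prime_tail_def sum_distrib_left
proof (rule double_sum_le)
  fix p assume p: "p \<in> primes_between m n"
  note pp = primes_betweenD[OF p]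
  have "common_multiple_density n p p * c p p \<le> 1 / real p * (\<gamma> / real p)"
    using diag[OF p] pp
    by (intro mult_mono common_multiple_density_diag_le common_multiple_density_nonneg) auto
  then have "ln (real p) * ln (real p) * (common_multiple_density n p p * c p p)
      \<le> ln (real p) * ln (real p) * (1 / real p * (\<gamma> / real p))"
    using pp by (intro mult_left_mono) auto
  also have "\<dots> = \<gamma> * ((ln (real p))\<^sup>2 / (real p)\<^sup>2)"
    by (simp add: power2_eq_square)
  finally show "ln (real p) * ln (real p) * (common_multiple_density n p p * c p p)
      \<le> \<gamma> * ((ln (real p))\<^sup>2 / (real p)\<^sup>2)" .
next
  fix p q assume p: "p \<in> primes_between m n" and q: "q \<in> primes_between m n" and "p \<noteq> q"
  note pp = primes_betweenD[OF p] and qq = primes_betweenD[OF q]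
  have "common_multiple_density n p q * c p q \<le> 1 / (real p * real q) * (1 / (real p * real q))"
    using off_diag[OF p q \<open>p \<noteq> q\<close>] pp qq \<open>p \<noteq> q\<close>
    by (intro mult_mono common_multiple_density_le common_multiple_density_nonneg) auto
  then have "ln (real p) * ln (real q) * (common_multiple_density n p q * c p q)
      \<le> ln (real p) * ln (real q) * (1 / (real p * real q) * (1 / (real p * real q)))"
    using pp qq by (intro mult_left_mono) auto
  then show "ln (real p) * ln (real q) * (common_multiple_density n p q * c p q)
      \<le> ln (real p) / (real p)\<^sup>2 * (ln (real q) / (real q)\<^sup>2)"
    by (simp add: power2_eq_square field_simps)
qed (auto dest: primes_betweenD)

lemma common_multiple_density_prime_bounds:
  assumes "p \<in> primes_between m n" "q \<in> primes_between m n"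
  shows "common_multiple_density n p p \<le> 1 / real p"
    and "p \<noteq> q \<Longrightarrow> common_multiple_density n p q \<le> 1 / (real p * real q)"
    and "common_multiple_density n p p * common_multiple_density n q q \<le> 1 / (real p * real q)"
proof -
  note pp = primes_betweenD[OF assms(1)] and qq = primes_betweenD[OF assms(2)]
  show p: "common_multiple_density n p p \<le> 1 / real p"
    using pp by (intro common_multiple_density_diag_le) simp
  show "p \<noteq> q \<Longrightarrow> common_multiple_density n p q \<le> 1 / (real p * real q)"
    using pp qq by (intro common_multiple_density_le)
  have "common_multiple_density n q q \<le> 1 / real q"
    using qq by (intro common_multiple_density_diag_le) simp
  with p have "common_multiple_density n p p * common_multiple_density n q q \<le> 1 / real p * (1 / real q)"
    by (intro mult_mono common_multiple_density_nonneg) auto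
  then show "common_multiple_density n p p * common_multiple_density n q q \<le> 1 / (real p * real q)"
    by simp
qed

lemma weight_sq_moment_le:
  "weight_sq_moment n m \<le> ln_sq_prime_tail m n + (ln_prime_tail m n)\<^sup>2"
proof -
  have "weight_sq_moment n m \<le> 1 * ln_sq_prime_tail m n + (ln_prime_tail m n)\<^sup>2"
    unfolding weight_sq_moment_eq
    by (rule density_weighted_sum_le) (simp_all add: common_multiple_density_nonneg common_multiple_density_prime_bounds)
  then show ?thesis by simp
qed

lemma weight_cross_moment_le:
  assumes "m \<ge> 1"
  shows "weight_cross_moment n m \<le> ln_sq_prime_tail m n / real m + (ln_prime_tail m n)\<^sup>2"
proof -
  have "common_multiple_density n p p * common_multiple_density n p p \<le> (1 / real m) / real p"
    if "p \<in> primes_between m n" for p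
  proof -
    have "common_multiple_density n p p * common_multiple_density n p p \<le> 1 / (real p * real p)"
      using common_multiple_density_prime_bounds(3)[OF that that] .
    also have "\<dots> \<le> (1 / real m) / real p"
      using primes_betweenD[OF that] assms by (simp add: divide_simps)
    finally show ?thesis .
  qed
  then have "weight_cross_moment n m \<le> 1 / real m * ln_sq_prime_tail m n + (ln_prime_tail m n)\<^sup>2"
    unfolding weight_cross_moment_eq
    by (intro density_weighted_sum_le)
       (simp_all add: common_multiple_density_nonneg common_multiple_density_prime_bounds)
  then show ?thesis by simp
qed

lemma weight_moments_le:
  assumes "m \<ge> 1"
  shows "real m * weight_sq_moment n m + (real m)\<^sup>2 * weight_cross_moment n m
       \<le> 2 * (real m * ln_sq_prime_tail m n + (real m * ln_prime_tail m n)\<^sup>2)"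
proof -
  let ?L1 = "ln_prime_tail m n" and ?L2 = "ln_sq_prime_tail m n"
  have m: "real m * 1 \<le> real m * real m"
    using assms by (intro mult_left_mono) auto
  have "real m * weight_sq_moment n m \<le> real m * ?L2 + real m * ?L1\<^sup>2"
    using weight_sq_moment_le[of n m] by (simp add: distrib_left[symmetric] mult_left_mono)
  also have "\<dots> \<le> real m * ?L2 + (real m * ?L1)\<^sup>2"
    using mult_right_mono[OF m zero_le_power2[of ?L1]]
    by (simp add: power_mult_distrib power2_eq_square[of "real m"])
  finally have "real m * weight_sq_moment n m \<le> real m * ?L2 + (real m * ?L1)\<^sup>2" .
  moreover have "(real m)\<^sup>2 * weight_cross_moment n m \<le> (real m)\<^sup>2 * (?L2 / real m + ?L1\<^sup>2)"
    using weight_cross_moment_le[OF assms] by (intro mult_left_mono) auto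
  moreover have "(real m)\<^sup>2 * (?L2 / real m + ?L1\<^sup>2) = real m * ?L2 + (real m * ?L1)\<^sup>2"
    using assms by (simp add: power2_eq_square field_simps)
  ultimately show ?thesis
    unfolding mult_2 by (intro add_mono) auto
qed

section \<open>Bounded differences of the statistic\<close>

lemma lam_ge_1_iff: "prime p \<Longrightarrow> u \<noteq> 0 \<Longrightarrow> 1 \<le> lam p u \<longleftrightarrow> p dvd u"
  unfolding lam_def using prime_multiplicity_gt_zero_iff[of p u] by auto

text \<open>The truncated difference card - 1 also covers primes dividing no coordinate.\<close>

lemma S_eq_sum_excess:
  assumes "m \<ge> 1" "x \<in> PiE {1..m} (\<lambda>_. {1..n})"
  shows "S n m x = (\<Sum>p\<in>primes_between m n. ln (real p) * real (card {j\<in>{1..m}. p dvd x j} - 1))"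
  unfolding S_def primes_between_def[symmetric]
proof (intro sum.cong refl arg_cong2[where f = "(*)"])
  fix p assume p: "p \<in> primes_between m n"
  have dvd: "1 \<le> lam p (x j) \<longleftrightarrow> p dvd x j" if "j \<in> {1..m}" for j
  proof -
    have "x j \<in> {1..n}"
      using assms(2) that by (rule PiE_mem)
    then show ?thesis
      using lam_ge_1_iff[of p "x j"] primes_betweenD(1)[OF p] by simp
  qed
  define c where "c = card {j\<in>{1..m}. p dvd x j}"
  have "(\<Sum>k=1..m. if 1 \<le> lam p (x k) then 1 else 0) = (\<Sum>k\<in>{1..m}. of_bool (p dvd x k) :: real)"
    by (rule sum.cong) (simp_all only: dvd of_bool_def)
  also have "\<dots> = real c"
    by (simp add: c_def Int_def)
  finally have count: "(\<Sum>k=1..m. if 1 \<le> lam p (x k) then 1 else 0) = real c" .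
  have "1 \<le> Max ((\<lambda>k. lam p (x k)) ` {1..m}) \<longleftrightarrow> (\<exists>k\<in>{1..m}. 1 \<le> lam p (x k))"
    using assms(1) by (subst Max_ge_iff) auto
  also have "\<dots> \<longleftrightarrow> c \<noteq> 0"
    using dvd by (auto simp: c_def)
  finally have max: "1 \<le> Max ((\<lambda>k. lam p (x k)) ` {1..m}) \<longleftrightarrow> c \<noteq> 0" .
  show "(\<Sum>k=1..m. if 1 \<le> lam p (x k) then 1 else 0)
      - (if 1 \<le> Max ((\<lambda>k. lam p (x k)) ` {1..m}) then 1 else 0)
      = real (card {j\<in>{1..m}. p dvd x j} - 1)"
    unfolding count max c_def[symmetric] by (cases c) simp_all
qed

definition collision_weight :: "nat \<Rightarrow> nat \<Rightarrow> (nat \<Rightarrow> nat) \<Rightarrow> nat \<Rightarrow> real" where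
  "collision_weight n m x k = (\<Sum>j\<in>{1..m} - {k}. common_weight n m (x k) (x j))"

lemma collision_weight_nonneg: "0 \<le> collision_weight n m x k"
  unfolding collision_weight_def by (intro sum_nonneg common_weight_nonneg)

lemma collision_weight_eq:
  "collision_weight n m x k = (\<Sum>p\<in>primes_between m n.
     ln (real p) * (of_bool (p dvd x k) * real (card {j\<in>{1..m} - {k}. p dvd x j})))"
proof -
  have "collision_weight n m x k = (\<Sum>p\<in>primes_between m n. \<Sum>j\<in>{1..m} - {k}.
      ln (real p) * (of_bool (p dvd x k) * of_bool (p dvd x j)))"
    unfolding collision_weight_def common_weight_def by (rule sum.swap)
  also have "\<dots> = (\<Sum>p\<in>primes_between m n.
      ln (real p) * (of_bool (p dvd x k) * real (card {j\<in>{1..m} - {k}. p dvd x j})))"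
    by (intro sum.cong refl) (simp add: sum_distrib_left[symmetric] Int_def)
  finally show ?thesis .
qed

lemma excess_update_le:
  fixes a b b' :: nat
  assumes "b \<le> 1" "b' \<le> 1"
  shows "\<bar>real (b + a - 1) - real (b' + a - 1)\<bar> \<le> (real b + real b') * real a"
proof (cases "a = 0")
  case False
  then have "\<bar>real (b + a - 1) - real (b' + a - 1)\<bar> = \<bar>real b - real b'\<bar>"
    by (simp add: of_nat_diff)
  also have "\<dots> \<le> (real b + real b') * 1"
    by simp
  also have "\<dots> \<le> (real b + real b') * real a"
    using False by (intro mult_left_mono) auto
  finally show ?thesis .
qed (use assms in simp)

lemma S_update_diff_le:
  assumes "m \<ge> 1" "k \<in> {1..m}" "x \<in> PiE {1..m} (\<lambda>_. {1..n})" "y \<in> {1..n}"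
  shows "\<bar>S n m x - S n m (x(k:=y))\<bar> \<le> collision_weight n m x k + collision_weight n m (x(k:=y)) k"
proof -
  define J where "J = {1..m} - {k}"
  define a where "a p = card {j\<in>J. p dvd x j}" for p
  have split: "card {j\<in>{1..m}. p dvd z j} = of_bool (p dvd z k) + card {j\<in>J. p dvd z j}" for p and z :: "nat \<Rightarrow> nat"
  proof -
    have "{j\<in>{1..m}. p dvd z j} = (if p dvd z k then insert k else id) {j\<in>J. p dvd z j}"
      using assms(2) by (auto simp: J_def)
    then show ?thesis by (simp add: J_def)
  qed
  have agree: "{j\<in>J. p dvd (x(k:=y)) j} = {j\<in>J. p dvd x j}" for p
    by (auto simp: J_def)
  have x': "x(k:=y) \<in> PiE {1..m} (\<lambda>_. {1..n})"
    using assms(2-4) by (auto simp: PiE_def extensional_def)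
  have "S n m x - S n m (x(k:=y)) = (\<Sum>p\<in>primes_between m n. ln (real p) *
      (real (of_bool (p dvd x k) + a p - 1) - real (of_bool (p dvd y) + a p - 1)))"
    unfolding S_eq_sum_excess[OF assms(1,3)] S_eq_sum_excess[OF assms(1) x'] split agree a_def
    by (simp add: sum_subtractf right_diff_distrib)
  then have "\<bar>S n m x - S n m (x(k:=y))\<bar> \<le> (\<Sum>p\<in>primes_between m n. \<bar>ln (real p) *
      (real (of_bool (p dvd x k) + a p - 1) - real (of_bool (p dvd y) + a p - 1))\<bar>)"
    by (simp only: sum_abs)
  also have "\<dots> = (\<Sum>p\<in>primes_between m n. ln (real p) *
      \<bar>real (of_bool (p dvd x k) + a p - 1) - real (of_bool (p dvd y) + a p - 1)\<bar>)"
    by (intro sum.cong refl) (simp only: abs_mult abs_of_nonneg[OF primes_betweenD(5)])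
  also have "\<dots> \<le> (\<Sum>p\<in>primes_between m n. ln (real p) *
      ((of_bool (p dvd x k) + of_bool (p dvd y)) * real (a p)))"
    using excess_update_le by (intro sum_mono mult_left_mono) (auto dest: primes_betweenD)
  also have "\<dots> = collision_weight n m x k + collision_weight n m (x(k:=y)) k"
    unfolding collision_weight_eq J_def[symmetric] agree a_def
    by (simp add: sum.distrib distrib_left distrib_right)
  finally show ?thesis .
qed

lemma avg_S_update_sq_le:
  assumes "m \<ge> 1" "n \<ge> 1" "k \<in> {1..m}"
  shows "avg (PiE {1..m} (\<lambda>_. {1..n})) (\<lambda>x. avg {1..n} (\<lambda>y. (S n m x - S n m (x(k:=y)))\<^sup>2))
     \<le> 4 * avg (PiE {1..m} (\<lambda>_. {1..n})) (\<lambda>x. (collision_weight n m x k)\<^sup>2)"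
proof -
  let ?X = "PiE {1..m} (\<lambda>_. {1..n})"
  let ?D = "\<lambda>x. collision_weight n m x k"
  have "avg ?X (\<lambda>x. avg {1..n} (\<lambda>y. (S n m x - S n m (x(k:=y)))\<^sup>2))
     \<le> avg ?X (\<lambda>x. avg {1..n} (\<lambda>y. 2 * (?D x)\<^sup>2 + 2 * (?D (x(k:=y)))\<^sup>2))"
  proof (intro avg_mono)
    fix x y assume "x \<in> ?X" "y \<in> {1..n}"
    then have "\<bar>S n m x - S n m (x(k:=y))\<bar> \<le> ?D x + ?D (x(k:=y))"
      using assms by (intro S_update_diff_le) auto
    then have "(S n m x - S n m (x(k:=y)))\<^sup>2 \<le> (?D x + ?D (x(k:=y)))\<^sup>2"
      by (metis abs_le_square_iff abs_of_nonneg add_nonneg_nonneg collision_weight_nonneg)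
    also have "\<dots> \<le> 2 * (?D x)\<^sup>2 + 2 * (?D (x(k:=y)))\<^sup>2"
      using sum_squares_bound[of "?D x" "?D (x(k:=y))"] by (simp add: power2_eq_square algebra_simps)
    finally show "(S n m x - S n m (x(k:=y)))\<^sup>2 \<le> 2 * (?D x)\<^sup>2 + 2 * (?D (x(k:=y)))\<^sup>2" .
  qed
  also have "\<dots> = 2 * avg ?X (\<lambda>x. (?D x)\<^sup>2) + 2 * avg ?X (\<lambda>x. avg {1..n} (\<lambda>y. (?D (x(k:=y)))\<^sup>2))"
    using assms by (simp add: avg_add avg_cmult avg_const)
  also have "avg ?X (\<lambda>x. avg {1..n} (\<lambda>y. (?D (x(k:=y)))\<^sup>2)) = avg ?X (\<lambda>x. (?D x)\<^sup>2)"
    using assms by (intro avg_PiE_resample) auto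
  finally show ?thesis by linarith
qed

lemma avg_PiE_common_weight_product:
  assumes "n \<ge> 1" "k \<in> {1..m}" "j \<in> {1..m} - {k}" "j' \<in> {1..m} - {k}"
  shows "avg (PiE {1..m} (\<lambda>_. {1..n})) (\<lambda>x. common_weight n m (x k) (x j) * common_weight n m (x k) (x j'))
       = (if j = j' then weight_sq_moment n m else weight_cross_moment n m)"
proof (cases "j = j'")
  case True
  then show ?thesis
    using avg_PiE_coord2[of k "{1..m}" j "{1..n}" "\<lambda>a b. common_weight n m a b * common_weight n m a b"] assms
    by (simp add: weight_sq_moment_def power2_eq_square)
next
  case False
  then show ?thesis
    using avg_PiE_coord3[of k "{1..m}" j j' "{1..n}" "\<lambda>a b c. common_weight n m a b * common_weight n m a c"] assms
    by (simp add: weight_cross_moment_def)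
qed

lemma avg_collision_weight_sq_le:
  assumes "n \<ge> 1" "k \<in> {1..m}"
  shows "avg (PiE {1..m} (\<lambda>_. {1..n})) (\<lambda>x. (collision_weight n m x k)\<^sup>2)
     \<le> real m * weight_sq_moment n m + (real m)\<^sup>2 * weight_cross_moment n m"
proof -
  let ?Q2 = "weight_sq_moment n m" and ?Q3 = "weight_cross_moment n m"
  define J where "J = {1..m} - {k}"
  have "finite J"
    unfolding J_def by simp
  have "card J \<le> m"
    using card_Diff1_le[of "{1..m}" k] unfolding J_def by simp
  have Q2: "0 \<le> ?Q2" and Q3: "0 \<le> ?Q3"
    unfolding weight_sq_moment_def weight_cross_moment_def
    by (intro avg_nonneg mult_nonneg_nonneg common_weight_nonneg; simp)+
  have row: "(\<Sum>j'\<in>J. if j = j' then ?Q2 else ?Q3) = ?Q2 + real (card J - 1) * ?Q3" if "j \<in> J" for j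
    using that \<open>finite J\<close> by (simp add: sum.remove)
  have "avg (PiE {1..m} (\<lambda>_. {1..n})) (\<lambda>x. (collision_weight n m x k)\<^sup>2)
      = (\<Sum>j\<in>J. \<Sum>j'\<in>J. if j = j' then ?Q2 else ?Q3)"
    unfolding collision_weight_def J_def power2_eq_square sum_product avg_sum
    using assms by (intro sum.cong refl avg_PiE_common_weight_product)
  also have "\<dots> = real (card J) * (?Q2 + real (card J - 1) * ?Q3)"
    by (simp add: row)
  also have "\<dots> \<le> real m * (?Q2 + real m * ?Q3)"
    using \<open>card J \<le> m\<close> Q2 Q3 by (intro mult_mono add_left_mono mult_right_mono) auto
  also have "\<dots> = real m * ?Q2 + (real m)\<^sup>2 * ?Q3"
    by (simp add: algebra_simps power2_eq_square)
  finally show ?thesis .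
qed

section \<open>The variance bound\<close>

lemma variance_unif_tuples:
  assumes "n \<ge> 1"
  shows "measure_pmf.variance (unif_tuples n m) f = avg_var (PiE {1..m} (\<lambda>_. {1..n})) f"
  using assms
  by (simp add: unif_tuples_def integral_pmf_of_set avg_var_def avg_def finite_PiE PiE_eq_empty_iff)

lemma variance_S_le:
  assumes "m \<ge> 1" "n \<ge> 1"
  shows "measure_pmf.variance (unif_tuples n m) (S n m)
     \<le> 8 * real m * (real m * ln_sq_prime_tail m n + (real m * ln_prime_tail m n)\<^sup>2)"
proof -
  let ?X = "PiE {1..m} (\<lambda>_. {1..n})"
  let ?Q2 = "weight_sq_moment n m" and ?Q3 = "weight_cross_moment n m"
  have "measure_pmf.variance (unif_tuples n m) (S n m) = avg_var ?X (S n m)"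
    using assms(2) by (rule variance_unif_tuples)
  also have "\<dots> \<le> (\<Sum>k\<in>{1..m}. avg ?X (\<lambda>x. avg {1..n} (\<lambda>y. (S n m x - S n m (x(k:=y)))\<^sup>2)))"
    using assms by (intro efron_stein) auto
  also have "\<dots> \<le> (\<Sum>k\<in>{1..m}. 4 * (real m * ?Q2 + (real m)\<^sup>2 * ?Q3))"
    using assms avg_S_update_sq_le avg_collision_weight_sq_le
    by (intro sum_mono) (meson mult_left_mono order_trans zero_le_numeral)
  also have "\<dots> = 4 * real m * (real m * ?Q2 + (real m)\<^sup>2 * ?Q3)"
    by simp
  also have "\<dots> \<le> 4 * real m * (2 * (real m * ln_sq_prime_tail m n + (real m * ln_prime_tail m n)\<^sup>2))"
    using assms by (intro mult_left_mono weight_moments_le) auto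
  finally show ?thesis
    by (simp add: algebra_simps)
qed

lemma variance_S_le_m_ln_m:
  assumes "m \<ge> 3" "n \<ge> 1"
  shows "measure_pmf.variance (unif_tuples n m) (S n m) \<le> 1248 * real m * ln (real m)"
proof -
  have "measure_pmf.variance (unif_tuples n m) (S n m)
      \<le> 8 * real m * (real m * ln_sq_prime_tail m n + (real m * ln_prime_tail m n)\<^sup>2)"
    using assms by (intro variance_S_le) auto
  also have "\<dots> \<le> 8 * real m * (156 * ln (real m))"
    using scaled_prime_tails_le[OF assms(1)] by (intro mult_left_mono) auto
  also have "\<dots> = 1248 * real m * ln (real m)"
    by simp
  finally show ?thesis .
qed

theorem lemma6p3:
  fixes m :: "nat \<Rightarrow> nat"
  assumes "filterlim m at_top at_top"
    and "(\<lambda>n. real (m n)) \<in> o(\<lambda>n. real n)"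
  shows "(\<lambda>n. measure_pmf.variance (unif_tuples n (m n)) (S n (m n)))
           \<in> O(\<lambda>n. real (m n) * ln (real (m n)))"
proof (rule bigoI[where c = 1248])
  have "eventually (\<lambda>n. 3 \<le> m n \<and> 1 \<le> n) at_top"
    using assms(1) by (auto simp: filterlim_at_top intro: eventually_conj eventually_ge_at_top)
  then show "eventually (\<lambda>n. norm (measure_pmf.variance (unif_tuples n (m n)) (S n (m n)))
      \<le> 1248 * norm (real (m n) * ln (real (m n)))) at_top"
  proof eventually_elim
    case (elim n)
    have "0 \<le> measure_pmf.variance (unif_tuples n (m n)) (S n (m n))"
      using elim by (simp add: variance_unif_tuples avg_var_nonneg)
    with elim show ?case
      using variance_S_le_m_ln_m[of "m n" n] by simp
  qed
qed

end
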